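(* For every field $K$ and every integer $n\geq 1$, $\mathrm{card}(\widetilde{K}_n)\leq (n+1)^{n^2+n+1}$. Consequently $\widetilde{K}$ is countable.
   Context: Let $K$ be a field. For $r\in K$, a finite set $A(r)$ with $\{r\}\subseteq A(r)\subseteq K$ is called adequate for $r$ if every mapping $f:A(r)\to K$ satisfying (1) if $1\in A(r)$ then $f(1)=1$; (2) if $a,b\in A(r)$ and $a+b\in A(r)$ then $f(a+b)=f(a)+f(b)$; (3) if $a,b\in A(r)$ and $a\cdot b\in A(r)$ then $f(a\cdot b)=f(a)\cdot f(b)$, also satisfies $f(r)=r$. $\widetilde{K}$ denotes the set of all $r\in K$ for which some finite set adequate for $r$ exists. For $n\ge1$, $\widetilde{K}_n$ denotes the set of all $r\in K$ for which there exists a set $A(r)$ adequate for $r$ with $\mathrm{card}(A(r))\leq n$; thus $\widetilde{K}=\bigcup_{n\ge1}\widetilde{K}_n$. *)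

theory Defs
  imports Main "HOL-Library.Countable_Set"
begin

text \<open>Maps A \<rightarrow> K are represented by total functions whose values outside A
  are irrelevant.\<close>
definition adequate :: "'a::field \<Rightarrow> 'a set \<Rightarrow> bool" where
  "adequate r A \<longleftrightarrow> finite A \<and> r \<in> A \<and>
     (\<forall>f :: 'a \<Rightarrow> 'a.
        ((1 \<in> A \<longrightarrow> f 1 = 1) \<and>
         (\<forall>a\<in>A. \<forall>b\<in>A. a + b \<in> A \<longrightarrow> f (a + b) = f a + f b) \<and>
         (\<forall>a\<in>A. \<forall>b\<in>A. a * b \<in> A \<longrightarrow> f (a * b) = f a * f b))
        \<longrightarrow> f r = r)"

definition Ktilde :: "'a::field set" where
  "Ktilde = {r. \<exists>A. adequate r A}"

definition Ktilde_n :: "nat \<Rightarrow> 'a::field set" where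
  "Ktilde_n n = {r. \<exists>A. adequate r A \<and> card A \<le> n}"

end

theory Submission
  imports Defs "HOL-Library.FuncSet"
begin

text \<open>Enumerate an adequate set A for r as e 0 = r, e 1, ..., with card A \<le> n, and record
  its addition and multiplication tables together with the position of 1 as a function
  into {0..n}, where 0 means that the sum, product or 1 lies outside A. Two elements with
  the same record are equal: the record yields a map from one adequate set to the other
  which respects 1, sums and products, so it fixes r, and it sends r to the first element
  of the other enumeration. Since sums and products are commutative, it suffices to record
  them for pairs of positions i \<le> j, and the two triangles fit into an n \<times> (n + 1)
  rectangle, so there are at most (n + 1)^(n^2 + n + 1) records.\<close>

definition enum_pos :: "'a set \<Rightarrow> (nat \<Rightarrow> 'a) \<Rightarrow> 'a \<Rightarrow> nat" where
  "enum_pos A e y = (if y \<in> A then Suc (inv_into {..<card A} e y) else 0)"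

definition op_table :: "nat \<Rightarrow> (nat \<Rightarrow> 'a::field) \<Rightarrow> ('a \<Rightarrow> nat) \<Rightarrow> nat \<times> nat \<Rightarrow> nat" where
  "op_table n e pos = (\<lambda>(i, c) \<in> {..<n} \<times> {..n}.
     if i < c then pos (e i + e (c - 1)) else pos (e c * e i))"

definition enum_code :: "nat \<Rightarrow> 'a::field set \<Rightarrow> (nat \<Rightarrow> 'a) \<Rightarrow> nat \<times> (nat \<times> nat \<Rightarrow> nat)" where
  "enum_code n A e = (enum_pos A e 1, op_table n e (enum_pos A e))"

lemma enum_pos_enum:
  assumes "bij_betw e {..<card A} A" "i < card A"
  shows "enum_pos A e (e i) = Suc i"
  using assms by (auto simp: enum_pos_def bij_betw_def)

lemma enum_pos_eq_SucD:
  assumes "bij_betw e {..<card A} A" "enum_pos A e y = Suc i"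
  shows "y = e i"
  using assms by (auto simp: enum_pos_def bij_betw_inv_into_right split: if_splits)

lemma enum_pos_le_card:
  assumes "bij_betw e {..<card A} A"
  shows "enum_pos A e y \<le> card A"
  using assms inv_into_into[of y e "{..<card A}"] by (auto simp: enum_pos_def bij_betw_def Suc_le_eq)

lemma op_table_add:
  assumes "i \<le> j" "j < n"
  shows "op_table n e pos (i, Suc j) = pos (e i + e j)"
  using assms by (simp add: op_table_def)

lemma op_table_mult:
  assumes "i \<le> j" "j < n"
  shows "op_table n e pos (j, i) = pos (e i * e j)"
  using assms by (simp add: op_table_def)

lemma op_table_in_PiE:
  assumes "\<And>y. pos y \<le> n"
  shows "op_table n e pos \<in> (\<Pi>\<^sub>E p \<in> {..<n} \<times> {..n}. {..n})"
  using assms by (auto simp: op_table_def)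

lemma card_code_space:
  "card ({..n} \<times> (\<Pi>\<^sub>E p \<in> {..<n} \<times> {..n}. {..n})) = (n + 1) ^ (n\<^sup>2 + n + 1)"
  by (simp add: card_cartesian_product card_PiE power2_eq_square algebra_simps power_add)

context
  fixes n :: nat and A B :: "'a::field set" and e e' :: "nat \<Rightarrow> 'a"
  assumes enum_A: "bij_betw e {..<card A} A"
    and enum_B: "bij_betw e' {..<card B} B"
    and card_A: "card A \<le> n"
    and same_code: "enum_code n A e = enum_code n B e'"
begin

lemma same_code_pos:
  assumes "enum_pos B e' z = enum_pos A e (e k)" "k < card A"
  shows "z = e' k"
  using assms enum_pos_enum[OF enum_A] enum_pos_eq_SucD[OF enum_B] by simp

lemma same_code_one:
  assumes "1 = e k" "k < card A"
  shows "1 = e' k"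
  using same_code assms by (intro same_code_pos) (simp_all add: enum_code_def)

lemma same_code_add:
  assumes "e i + e j = e k" "i < card A" "j < card A" "k < card A"
  shows "e' i + e' j = e' k"
  using assms
proof (induction i j rule: linorder_wlog)
  case (le i j)
  have "op_table n e (enum_pos A e) (i, Suc j) = op_table n e' (enum_pos B e') (i, Suc j)"
    using same_code by (simp add: enum_code_def)
  with le card_A show ?case by (intro same_code_pos) (simp_all add: op_table_add)
qed (simp add: add.commute)

lemma same_code_mult:
  assumes "e i * e j = e k" "i < card A" "j < card A" "k < card A"
  shows "e' i * e' j = e' k"
  using assms
proof (induction i j rule: linorder_wlog)
  case (le i j)
  have "op_table n e (enum_pos A e) (j, i) = op_table n e' (enum_pos B e') (j, i)"
    using same_code by (simp add: enum_code_def)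
  with le card_A show ?case by (intro same_code_pos) (simp_all add: op_table_mult)
qed (simp add: mult.commute)

lemma same_code_first_eq_if_adequate:
  assumes "adequate (e 0) A"
  shows "e' 0 = e 0"
proof -
  define f where "f = e' \<circ> inv_into {..<card A} e"
  have f_enum: "f (e i) = e' i" if "i < card A" for i
    using enum_A that by (simp add: f_def bij_betw_def)
  have enum_cases: "\<exists>i < card A. x = e i" if "x \<in> A" for x
    using enum_A that by (auto simp: bij_betw_def)
  have "f 1 = 1" if one: "1 \<in> A"
  proof -
    obtain k where "k < card A" "1 = e k" using enum_cases[OF one] by blast
    then show ?thesis using same_code_one f_enum by metis
  qed
  moreover have "f (a + b) = f a + f b" if in_A: "a \<in> A" "b \<in> A" "a + b \<in> A" for a b
  proof -
    obtain i j k where "i < card A" "j < card A" "k < card A" "a = e i" "b = e j" "a + b = e k"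
      using enum_cases in_A by meson
    then show ?thesis using same_code_add[of i j k] f_enum by simp
  qed
  moreover have "f (a * b) = f a * f b" if in_A: "a \<in> A" "b \<in> A" "a * b \<in> A" for a b
  proof -
    obtain i j k where "i < card A" "j < card A" "k < card A" "a = e i" "b = e j" "a * b = e k"
      using enum_cases in_A by meson
    then show ?thesis using same_code_mult[of i j k] f_enum by simp
  qed
  ultimately have "f (e 0) = e 0"
    using assms unfolding adequate_def by blast
  moreover have "0 < card A"
    using assms by (auto simp: adequate_def card_gt_0_iff)
  ultimately show ?thesis by (simp add: f_enum)
qed

end

lemma ex_enum_starting_at:
  assumes "finite A" "r \<in> A"
  shows "\<exists>e. bij_betw e {..<card A} A \<and> e 0 = r"
proof -
  obtain xs where xs: "set xs = A - {r}" "distinct xs"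
    using finite_distinct_list[of "A - {r}"] assms by auto
  have "distinct (r # xs)" "set (r # xs) = A"
    using xs assms by auto
  moreover from this have "card A = length (r # xs)"
    using distinct_card by fastforce
  ultimately have "bij_betw ((!) (r # xs)) {..<card A} A"
    by (simp add: bij_betw_nth)
  then show ?thesis by auto
qed

lemma adequate_enum_code:
  assumes "adequate r A" "card A \<le> n"
  obtains e where "bij_betw e {..<card A} A" "e 0 = r"
    "enum_code n A e \<in> {..n} \<times> (\<Pi>\<^sub>E p \<in> {..<n} \<times> {..n}. {..n})"
proof -
  obtain e where e: "bij_betw e {..<card A} A" "e 0 = r"
    using ex_enum_starting_at[of A r] assms(1) unfolding adequate_def by blast
  have "enum_pos A e y \<le> n" for y
    using enum_pos_le_card[OF e(1)] assms(2) by (rule le_trans)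
  then have "enum_code n A e \<in> {..n} \<times> (\<Pi>\<^sub>E p \<in> {..<n} \<times> {..n}. {..n})"
    by (simp add: enum_code_def op_table_in_PiE)
  with e show ?thesis by (rule that)
qed

lemma card_Ktilde_n_le:
  shows "finite (Ktilde_n n :: 'a::field set) \<and> card (Ktilde_n n :: 'a set) \<le> (n + 1) ^ (n\<^sup>2 + n + 1)"
proof -
  let ?codes = "{..n} \<times> (\<Pi>\<^sub>E p \<in> {..<n} \<times> {..n}. {..n})"
  define encodes where "encodes r c \<longleftrightarrow> (\<exists>A e. adequate r A \<and> card A \<le> n \<and>
      bij_betw e {..<card A} A \<and> e 0 = r \<and> enum_code n A e = c)" for r :: 'a and c
  have has_code: "\<exists>c. c \<in> ?codes \<and> encodes r c" if r: "r \<in> Ktilde_n n" for r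
  proof -
    obtain A where A: "adequate r A" "card A \<le> n"
      using r unfolding Ktilde_n_def by blast
    then obtain e where e: "bij_betw e {..<card A} A" "e 0 = r" and code: "enum_code n A e \<in> ?codes"
      by (rule adequate_enum_code)
    have "encodes r (enum_code n A e)"
      using A e unfolding encodes_def by blast
    with code show ?thesis by (intro exI conjI)
  qed
  have code_inj: "r = s" if r: "encodes r c" and s: "encodes s c" for r s c
  proof -
    obtain A e where A: "adequate r A" "card A \<le> n" and e: "bij_betw e {..<card A} A" "e 0 = r"
      and code_A: "enum_code n A e = c"
      using r unfolding encodes_def by auto
    obtain B e' where e': "bij_betw e' {..<card B} B" "e' 0 = s" and code_B: "enum_code n B e' = c"
      using s unfolding encodes_def by auto
    have "enum_code n A e = enum_code n B e'"
      using code_A code_B by (rule trans_sym)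
    then have "e' 0 = e 0"
      using A e e' by (intro same_code_first_eq_if_adequate) simp_all
    with e(2) e'(2) show ?thesis by simp
  qed
  have subset_card_le: "card G \<le> card ?codes" if "G \<subseteq> Ktilde_n n" for G :: "'a set"
  proof (rule card_le_if_inj_on_rel[where r = encodes])
    show "finite ?codes" by (simp add: finite_PiE)
    show "\<exists>c. c \<in> ?codes \<and> encodes r c" if "r \<in> G" for r
      using that \<open>G \<subseteq> Ktilde_n n\<close> by (intro has_code) blast
  qed (rule code_inj)
  have "finite (Ktilde_n n :: 'a set) \<and> card (Ktilde_n n :: 'a set) \<le> card ?codes"
    by (rule finite_if_finite_subsets_card_bdd) (rule subset_card_le)
  then show ?thesis
    by (simp only: card_code_space)
qed

lemma countable_Ktilde: "countable (Ktilde :: 'a::field set)"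
proof -
  have "countable (\<Union>n. Ktilde_n n :: 'a set)"
    using card_Ktilde_n_le by (intro countable_UN) (auto intro: countable_finite)
  moreover have "(Ktilde :: 'a set) = (\<Union>n. Ktilde_n n)"
    by (auto simp: Ktilde_def Ktilde_n_def)
  ultimately show ?thesis by simp
qed

theorem theorem2:
  shows "(\<forall>n::nat. n \<ge> 1 \<longrightarrow>
            finite (Ktilde_n n :: 'a::field set) \<and>
            card (Ktilde_n n :: 'a set) \<le> (n + 1) ^ (n\<^sup>2 + n + 1))
         \<and> countable (Ktilde :: 'a set)"
  using card_Ktilde_n_le countable_Ktilde by blast

end
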